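(* Let $n\ge 2$ be an integer. Then $$\binom{n^3-\lfloor\frac{(n-1)^3+1}{2}\rfloor}{3n^2-3n+1}+\binom{n^3-\lfloor\frac{(n-1)^3+2}{2}\rfloor}{3n^2-3n+1}< \frac{1}{n^3}\binom{n^3+6n^2-6n+2}{n^3-1}.$$ *)

theory Defs
  imports Complex_Main
begin

end

theory Submission
  imports Defs
begin

text \<open>With \<open>N = n\<^sup>3\<close>, \<open>k = (n-1)\<^sup>3\<close>, \<open>m = N - k = 3n\<^sup>2 - 3n + 1\<close> and \<open>K = N - 1\<close>, the
two upper indices on the left add up to \<open>m + K\<close>, so by Vandermonde the left-hand side is at
most \<open>(m+K choose K)\<close>, while the right-hand side is \<open>(2m+1+K choose K) / N\<close>. Raising the upper
index of \<open>(x+K choose K)\<close> by one multiplies it by \<open>(x+1+K)/(x+1) \<ge> 1 + K/(2m+1)\<close> as long as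
\<open>x + 1 \<le> 2m+1\<close>, so the quotient of the two binomials is at least \<open>(1 + K/(2m+1))\<^sup>m\<^sup>+\<^sup>1\<close>,
and a second-order Bernoulli estimate shows that this exceeds \<open>K + 1 = N\<close>.\<close>

lemma choose_add_choose_le_choose_add:
  fixes a b m :: nat
  assumes "m \<ge> 1"
  shows "(a choose m) + (b choose m) \<le> (a + b) choose m"
proof -
  have "(a choose m) + (b choose m) = (\<Sum>i\<in>{0, m}. (a choose i) * (b choose (m - i)))"
    using assms by simp
  also have "\<dots> \<le> (\<Sum>i\<le>m. (a choose i) * (b choose (m - i)))"
    by (rule sum_mono2) auto
  also have "\<dots> = (a + b) choose m"
    by (rule vandermonde)
  finally show ?thesis .
qed

lemma choose_Suc_upper_ratio:
  fixes x K :: nat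
  shows "real (Suc (x + K) choose K) = real ((x + K) choose K) * real (Suc (x + K)) / real (Suc x)"
proof -
  have "Suc x * (Suc (x + K) choose K) = Suc (x + K) * ((x + K) choose K)"
    using binomial_absorb_comp[of "Suc (x + K)" K] by simp
  then have "real (Suc x) * real (Suc (x + K) choose K) = real (Suc (x + K)) * real ((x + K) choose K)"
    by (metis of_nat_mult)
  then show ?thesis
    by (simp add: field_simps del: of_nat_Suc)
qed

lemma choose_upper_growth:
  fixes m d D K :: nat
  assumes "d \<le> D"
  shows "real ((m + K) choose K) * (1 + real K / real (m + D)) ^ d \<le> real ((m + d + K) choose K)"
  using assms
proof (induction d)
  case 0
  then show ?case by simp
next
  case (Suc d)
  let ?x = "m + d"
  have "1 + real K / real (m + D) \<le> 1 + real K / real (Suc ?x)"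
    using Suc.prems by (intro add_left_mono divide_left_mono) auto
  also have "\<dots> = real (Suc (?x + K)) / real (Suc ?x)"
    by (simp add: field_simps)
  finally have factor: "1 + real K / real (m + D) \<le> real (Suc (?x + K)) / real (Suc ?x)" .
  have "real ((m + K) choose K) * (1 + real K / real (m + D)) ^ Suc d
      = real ((m + K) choose K) * (1 + real K / real (m + D)) ^ d * (1 + real K / real (m + D))"
    by simp
  also have "\<dots> \<le> real ((?x + K) choose K) * (real (Suc (?x + K)) / real (Suc ?x))"
    using Suc factor by (intro mult_mono) auto
  also have "\<dots> = real ((m + Suc d + K) choose K)"
    using choose_Suc_upper_ratio[of ?x K] by simp
  finally show ?case .
qed

lemma Bernoulli_inequality_second_order:
  fixes t :: real
  assumes "t \<ge> 0"
  shows "1 + real j * t + real j * (real j - 1) / 2 * t ^ 2 \<le> (1 + t) ^ j"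
proof (induction j)
  case 0
  then show ?case by simp
next
  case (Suc j)
  have "(1 + real j * t + real j * (real j - 1) / 2 * t ^ 2) * (1 + t)
      = 1 + real (Suc j) * t + real (Suc j) * (real (Suc j) - 1) / 2 * t ^ 2
        + real j * (real j - 1) / 2 * t ^ 3"
    by (simp add: field_simps power2_eq_square power3_eq_cube)
  moreover have "0 \<le> real j * (real j - 1) / 2 * t ^ 3"
    using assms by (cases j) auto
  ultimately have "1 + real (Suc j) * t + real (Suc j) * (real (Suc j) - 1) / 2 * t ^ 2
      \<le> (1 + real j * t + real j * (real j - 1) / 2 * t ^ 2) * (1 + t)"
    by linarith
  also have "\<dots> \<le> (1 + t) ^ j * (1 + t)"
    using Suc assms by (intro mult_right_mono) auto
  finally show ?case by (simp add: mult.commute)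
qed

lemma linear_term_ge:
  fixes x k :: real
  assumes "x \<ge> 0" and "k \<ge> 0"
  shows "k / 2 \<le> (x + 1) * (k / (2 * x + 1))"
  using assms by (simp add: field_simps)

lemma quadratic_term_ge:
  fixes x k :: real
  assumes "x \<ge> 1"
  shows "k^2 / 9 \<le> (x + 1) * x / 2 * (k / (2 * x + 1))^2"
proof -
  have "1 \<le> x * x"
    using mult_mono[OF assms assms] assms by simp
  then have "1 / 9 \<le> (x + 1) * x / (2 * (2 * x + 1)^2)"
    using assms by (simp add: field_simps power2_eq_square)
  then have "k^2 * (1 / 9) \<le> k^2 * ((x + 1) * x / (2 * (2 * x + 1)^2))"
    by (rule mult_left_mono) simp
  then show ?thesis
    by (simp add: power_divide mult_ac)
qed

lemma one_add_pow_gt: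
  fixes m K :: nat
  assumes "m \<ge> 1" and "K \<ge> 5"
  shows "real (K + 1) < (1 + real K / real (2 * m + 1)) ^ (m + 1)"
proof -
  define t where "t = real K / real (2 * m + 1)"
  have "real (K + 1) < 1 + real K / 2 + real K ^ 2 / 9"
    using assms(2) by (simp add: power2_eq_square field_simps)
  also have "\<dots> \<le> 1 + real (m + 1) * t + real (m + 1) * (real (m + 1) - 1) / 2 * t ^ 2"
    using linear_term_ge[of "real m" "real K"] quadratic_term_ge[of "real m" "real K"] assms(1)
    unfolding t_def of_nat_Suc of_nat_add of_nat_mult by simp
  also have "\<dots> \<le> (1 + t) ^ (m + 1)"
    by (rule Bernoulli_inequality_second_order) (simp add: t_def)
  finally show ?thesis unfolding t_def .
qed

lemma choose_mult_lt_choose: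
  fixes m K :: nat
  assumes "m \<ge> 1" and "K \<ge> 5"
  shows "real ((m + K) choose K) * real (K + 1) < real ((2 * m + 1 + K) choose K)"
proof -
  have "real ((m + K) choose K) * real (K + 1)
      < real ((m + K) choose K) * (1 + real K / real (2 * m + 1)) ^ (m + 1)"
    using one_add_pow_gt[OF assms] by (intro mult_strict_left_mono) auto
  also have "\<dots> \<le> real ((m + (m + 1) + K) choose K)"
    using choose_upper_growth[of "m + 1" "m + 1" m K] by (simp add: add.assoc)
  finally show ?thesis by (simp add: add_ac mult_2)
qed

lemma choose_floor_halves_le:
  fixes k m :: nat
  assumes "m \<ge> 1"
  shows "((k + m - (k + 1) div 2) choose m) + ((k + m - (k + 2) div 2) choose m)
    \<le> (m + (k + m - 1)) choose (k + m - 1)"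
proof -
  have "(k + 1) div 2 + (k + 2) div 2 = k + 1" "(k + 2) div 2 \<le> k + 1"
    by presburger+
  then have "(k + m - (k + 1) div 2) + (k + m - (k + 2) div 2) = m + (k + m - 1)"
    using assms by linarith
  then have "((k + m - (k + 1) div 2) choose m) + ((k + m - (k + 2) div 2) choose m)
      \<le> (m + (k + m - 1)) choose m"
    by (metis choose_add_choose_le_choose_add assms)
  also have "\<dots> = (m + (k + m - 1)) choose (k + m - 1)"
    using binomial_symmetric[of m "m + (k + m - 1)"] by simp
  finally show ?thesis .
qed

theorem proposition3:
  fixes n :: nat
  assumes "n \<ge> 2"
  shows "real ((n^3 - ((n-1)^3 + 1) div 2) choose (3*n^2 - 3*n + 1))
       + real ((n^3 - ((n-1)^3 + 2) div 2) choose (3*n^2 - 3*n + 1))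
       < (1 / real n ^ 3) * real ((n^3 + 6*n^2 - 6*n + 2) choose (n^3 - 1))"
proof -
  obtain q where q: "n = Suc q"
    using assms by (cases n) auto
  define k m K where "k = q ^ 3" and "m = 3*q^2 + 3*q + 1" and "K = n^3 - 1"
  have k_eq: "(n - 1)^3 = k" and cube: "n^3 = k + m"
    unfolding q k_def m_def by (simp_all add: power2_eq_square power3_eq_cube algebra_simps)
  have "3*n^2 = 3*q^2 + 3*q + 3*n" "6*n^2 + 2 = 2*m + 6*n"
    unfolding q m_def by (simp_all add: power2_eq_square)
  moreover have "n^3 = K + 1" "m \<ge> 1" "K \<ge> 5"
    using power_mono[OF assms, of 3] unfolding K_def m_def by simp_all
  ultimately have m_eq: "3*n^2 - 3*n + 1 = m" and rhs_upper: "n^3 + 6*n^2 - 6*n + 2 = 2*m + 1 + K"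
    unfolding m_def by linarith+
  have "((n^3 - (k + 1) div 2) choose m) + ((n^3 - (k + 2) div 2) choose m) \<le> (m + K) choose K"
    using choose_floor_halves_le[OF \<open>m \<ge> 1\<close>, of k] unfolding cube[symmetric] K_def[symmetric] .
  then have "real ((n^3 - (k + 1) div 2) choose m) + real ((n^3 - (k + 2) div 2) choose m)
      \<le> real ((m + K) choose K)"
    by (simp only: of_nat_add[symmetric] of_nat_le_iff)
  also have "\<dots> < real ((2 * m + 1 + K) choose K) / real (K + 1)"
    using choose_mult_lt_choose[OF \<open>m \<ge> 1\<close> \<open>K \<ge> 5\<close>] by (subst pos_less_divide_eq) simp_all
  also have "\<dots> = (1 / real n ^ 3) * real ((n^3 + 6*n^2 - 6*n + 2) choose (n^3 - 1))"
    unfolding rhs_upper K_def[symmetric] \<open>n^3 = K + 1\<close>[symmetric] by simp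
  finally show ?thesis
    unfolding m_eq k_eq .
qed

end
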